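(* In the setting of the context, for every integer $n\ge1$, every $\theta\in\{0,1\}$ and every $t\ge0$, the solution $g_n$ of the truncated problem satisfies $\int_0^n(\zeta+\zeta^{-2\beta})g_n(\zeta,t)\,d\zeta\le\mathcal{B}$, where $\mathcal{B}>0$ is a constant depending only on $g^{in}$ (one may take $\mathcal{B}=\int_0^\infty(\zeta^{-2\beta}+\zeta)g^{in}(\zeta)d\zeta$).
   Context: $\Psi:(0,\infty)^2\to[0,\infty)$ is measurable and symmetric and there are $\beta>0$, $k>0$ with $\Psi(\zeta,\eta)\le k(\zeta\eta)^{-\beta}$ on $(0,1)^2$, $\Psi(\zeta,\eta)\le k\eta\zeta^{-\beta}$ on $(0,1)\times(1,\infty)$, and $\Psi(\zeta,\eta)\le k(\zeta+\eta)$ on $(1,\infty)^2$. Let $g^{in}\ge0$ with $g^{in}\in L^1((0,\infty);(\zeta^{-2\beta}+\zeta)d\zeta)$. For an integer $n\ge1$ and $\theta\in\{0,1\}$ set $\Psi_n^\theta(\zeta,\eta):=\Psi(\zeta,\eta)\chi_{(1/n,n)}(\zeta)\chi_{(1/n,n)}(\eta)[1-\theta+\theta\chi_{(0,n)}(\zeta+\eta)]$. Let $g_n\in\mathcal{C}^1([0,\infty);L^1(0,n))$ be the unique non-negative solution of $\partial_t g_n(\zeta,t)=\frac12\int_0^\zeta\Psi(\zeta-\eta,\eta)g_n(\zeta-\eta,t)g_n(\eta,t)d\eta-\int_0^{n-\theta\zeta}\Psi_n^\theta(\zeta,\eta)g_n(\zeta,t)g_n(\eta,t)d\eta$, $(\zeta,t)\in(0,n)\times(0,\infty)$,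 with $g_n(\zeta,0)=g^{in}(\zeta)\chi_{(0,n)}(\zeta)$ (its existence and uniqueness are known since $\Psi_n^\theta$ is bounded). *)

theory Defs
  imports "HOL-Analysis.Analysis"
begin

definition trunc_kernel :: "(real \<Rightarrow> real \<Rightarrow> real) \<Rightarrow> nat \<Rightarrow> nat \<Rightarrow> real \<Rightarrow> real \<Rightarrow> real" where
  "trunc_kernel Psi n \<theta> z e =
     Psi z e * indicator {1 / real n<..<real n} z * indicator {1 / real n<..<real n} e
       * (1 - real \<theta> + real \<theta> * indicator {0<..<real n} (z + e))"

definition kernel_hyp :: "(real \<Rightarrow> real \<Rightarrow> real) \<Rightarrow> real \<Rightarrow> real \<Rightarrow> bool" where
  "kernel_hyp Psi \<beta> k \<longleftrightarrow>
     \<beta> > 0 \<and> k > 0 \<and>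
     set_borel_measurable borel ({0<..} \<times> {0<..}) (\<lambda>(z, e). Psi z e) \<and>
     (\<forall>z>0. \<forall>e>0. Psi z e \<ge> 0 \<and> Psi z e = Psi e z) \<and>
     (\<forall>z\<in>{0<..<1}. \<forall>e\<in>{0<..<1}. Psi z e \<le> k * (z * e) powr (-\<beta>)) \<and>
     (\<forall>z\<in>{0<..<1}. \<forall>e\<in>{1<..}. Psi z e \<le> k * e * z powr (-\<beta>)) \<and>
     (\<forall>z\<in>{1<..}. \<forall>e\<in>{1<..}. Psi z e \<le> k * (z + e))"

text \<open>g (zeta, t) is a non-negative solution in C^1([0,oo); L^1(0,n)) of the truncated problem.
  The time derivative is taken in L^1(0,n) (one-sided at t = 0); g' is that derivative,
  continuous in L^1; the equation holds in L^1(0,n), i.e. for a.e. zeta in (0,n), for every t > 0.\<close>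
definition trunc_solution ::
  "(real \<Rightarrow> real \<Rightarrow> real) \<Rightarrow> (real \<Rightarrow> real) \<Rightarrow> nat \<Rightarrow> nat \<Rightarrow> (real \<Rightarrow> real \<Rightarrow> real) \<Rightarrow> bool" where
  "trunc_solution Psi gin n \<theta> g \<longleftrightarrow>
     (\<forall>t\<ge>0. \<forall>z\<in>{0<..<real n}. g z t \<ge> 0) \<and>
     (\<exists>g'.
        (\<forall>t\<ge>0. set_integrable lborel {0<..<real n} (\<lambda>z. g z t)) \<and>
        (\<forall>t\<ge>0. set_integrable lborel {0<..<real n} (\<lambda>z. g' z t)) \<and>
        (\<forall>t\<ge>0. ((\<lambda>s. (LINT z:{0<..<real n}|lborel. \<bar>g z s - g z t - (s - t) * g' z t\<bar>) / \<bar>s - t\<bar>)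
                    \<longlongrightarrow> 0) (at t within {0..})) \<and>
        (\<forall>t\<ge>0. ((\<lambda>s. LINT z:{0<..<real n}|lborel. \<bar>g' z s - g' z t\<bar>) \<longlongrightarrow> 0) (at t within {0..})) \<and>
        (\<forall>t>0. AE z in lborel. z \<in> {0<..<real n} \<longrightarrow>
            g' z t = (1/2) * (LINT e:{0<..<z}|lborel. trunc_kernel Psi n \<theta> (z - e) e * g (z - e) t * g e t)
                     - (LINT e:{0<..<real n - real \<theta> * z}|lborel. trunc_kernel Psi n \<theta> z e * g z t * g e t))) \<and>
     (AE z in lborel. z \<in> {0<..<real n} \<longrightarrow> g z 0 = gin z)"

end

theory Submission
  imports Defs
begin

text \<open>For a weight \<open>h\<close> that is nonnegative, bounded on \<open>(0, n)\<close> and subadditive, the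
  symmetric weak formulation of the truncated equation gives \<open>d/dt \<integral> h g\<^sub>n \<le> 0\<close>: after the
  substitution \<open>\<zeta> = x + \<eta>\<close> the gain term is bounded by \<open>\<integral>\<integral> (h x + h \<eta>) \<Psi>\<^sub>n x \<eta> g x g \<eta>\<close>,
  which by the symmetry of the truncated kernel is twice the loss term.  The weight
  \<open>\<zeta> + \<zeta>\<^sup>-\<^sup>2\<^sup>\<beta>\<close> is subadditive because \<open>\<zeta>\<^sup>-\<^sup>2\<^sup>\<beta>\<close> decreases, but it is unbounded near \<open>0\<close>; the
  cut-off weights \<open>min \<zeta>\<^sup>-\<^sup>2\<^sup>\<beta> M + \<zeta>\<close> are bounded and still subadditive, and monotone convergence
  as \<open>M \<rightarrow> \<infinity>\<close> yields the bound by the initial moment.\<close>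

section \<open>Differentiation under the integral sign\<close>

lemma set_integrable_bounded_mult:
  fixes f h :: "'a \<Rightarrow> real"
  assumes f: "set_integrable M I f" and I: "I \<in> sets M"
    and h: "h \<in> borel_measurable M" and hb: "\<And>z. z \<in> I \<Longrightarrow> \<bar>h z\<bar> \<le> H"
  shows "set_integrable M I (\<lambda>z. h z * f z)"
proof (rule set_integrable_bound)
  show "set_integrable M I (\<lambda>z. H * f z)"
    using f by simp
  have "(\<lambda>z. indicator I z * f z) \<in> borel_measurable M"
    using f by (auto simp: set_integrable_def)
  then have "(\<lambda>z. h z * (indicator I z * f z)) \<in> borel_measurable M"
    using h by measurable
  then show "set_borel_measurable M I (\<lambda>z. h z * f z)"
    by (simp add: set_borel_measurable_def mult.left_commute)
  have "norm (h z * f z) \<le> norm (H * f z)" if "z \<in> I" for z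
  proof -
    have "\<bar>h z * f z\<bar> \<le> H * \<bar>f z\<bar>"
      using hb[OF that] by (simp add: abs_mult mult_right_mono)
    also have "\<dots> \<le> \<bar>H * f z\<bar>"
      by (simp add: abs_mult mult_right_mono)
    finally show ?thesis by simp
  qed
  then show "AE z in M. z \<in> I \<longrightarrow> norm (h z * f z) \<le> norm (H * f z)"
    by simp
qed

lemma set_integral_bounded_mult_norm_le:
  fixes f h :: "'a \<Rightarrow> real"
  assumes f: "set_integrable M I f" and I: "I \<in> sets M"
    and h: "h \<in> borel_measurable M" and hb: "\<And>z. z \<in> I \<Longrightarrow> \<bar>h z\<bar> \<le> H"
  shows "\<bar>LINT z:I|M. h z * f z\<bar> \<le> H * (LINT z:I|M. \<bar>f z\<bar>)"
proof -
  have "\<bar>LINT z:I|M. h z * f z\<bar> \<le> (LINT z:I|M. \<bar>h z * f z\<bar>)"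
    using set_integral_norm_bound[OF set_integrable_bounded_mult[OF assms]] by simp
  also have "\<dots> \<le> (LINT z:I|M. H * \<bar>f z\<bar>)"
    using set_integrable_abs[OF set_integrable_bounded_mult[OF assms]] set_integrable_abs[OF f] hb
    by (intro set_integral_mono) (auto simp: abs_mult intro: mult_right_mono)
  finally show ?thesis by simp
qed

lemma weighted_set_integral_has_real_derivative:
  fixes g g' :: "'a \<Rightarrow> real \<Rightarrow> real" and h :: "'a \<Rightarrow> real"
  assumes I: "I \<in> sets M" and h: "h \<in> borel_measurable M" and hb: "\<And>z. z \<in> I \<Longrightarrow> \<bar>h z\<bar> \<le> H"
    and g: "\<And>r. r \<in> T \<Longrightarrow> set_integrable M I (\<lambda>z. g z r)"
    and g': "set_integrable M I (\<lambda>z. g' z s)" and s: "s \<in> T"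
    and lim: "((\<lambda>r. (LINT z:I|M. \<bar>g z r - g z s - (r - s) * g' z s\<bar>) / \<bar>r - s\<bar>) \<longlongrightarrow> 0) (at s within T)"
  shows "((\<lambda>r. LINT z:I|M. h z * g z r) has_real_derivative (LINT z:I|M. h z * g' z s)) (at s within T)"
proof -
  define \<Phi> where "\<Phi> r = (LINT z:I|M. h z * g z r)" for r
  define D where "D = (LINT z:I|M. h z * g' z s)"
  define E where "E r = (LINT z:I|M. \<bar>g z r - g z s - (r - s) * g' z s\<bar>) / \<bar>r - s\<bar>" for r
  have "\<bar>(\<Phi> r - \<Phi> s) / (r - s) - D\<bar> \<le> H * E r" if r: "r \<in> T" "r \<noteq> s" for r
  proof -
    have X: "set_integrable M I (\<lambda>z. g z r - g z s - (r - s) * g' z s)"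
      using g[OF r(1)] g[OF s] g' by auto
    have bm: "\<And>f. set_integrable M I f \<Longrightarrow> set_integrable M I (\<lambda>z. h z * f z)"
      using set_integrable_bounded_mult I h hb by blast
    have hr: "set_integrable M I (\<lambda>z. h z * g z r)" and hs: "set_integrable M I (\<lambda>z. h z * g z s)"
      and hs': "set_integrable M I (\<lambda>z. (r - s) * (h z * g' z s))"
      using bm[OF g[OF r(1)]] bm[OF g[OF s]] bm[OF g'] by auto
    have "\<Phi> r - \<Phi> s - (r - s) * D
        = (LINT z:I|M. h z * g z r - h z * g z s - (r - s) * (h z * g' z s))"
      using set_integral_diff[OF hr hs] set_integral_diff(2)[OF set_integral_diff(1)[OF hr hs] hs']
      by (simp add: \<Phi>_def D_def)
    also have "\<dots> = (LINT z:I|M. h z * (g z r - g z s - (r - s) * g' z s))"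
      by (simp add: algebra_simps)
    also have "\<bar>\<dots>\<bar> \<le> H * (LINT z:I|M. \<bar>g z r - g z s - (r - s) * g' z s\<bar>)"
      by (rule set_integral_bounded_mult_norm_le[OF X I h hb])
    finally have "\<bar>\<Phi> r - \<Phi> s - (r - s) * D\<bar> / \<bar>r - s\<bar> \<le> H * E r"
      unfolding E_def by (simp add: divide_right_mono)
    moreover have "(\<Phi> r - \<Phi> s) / (r - s) - D = (\<Phi> r - \<Phi> s - (r - s) * D) / (r - s)"
      using r by (simp add: diff_divide_distrib)
    ultimately show ?thesis
      by simp
  qed
  then have "\<forall>\<^sub>F r in at s within T. norm ((\<Phi> r - \<Phi> s) / (r - s) - D) \<le> H * E r"
    by (auto simp: eventually_at_filter)
  moreover have "((\<lambda>r. H * E r) \<longlongrightarrow> 0) (at s within T)"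
    using tendsto_mult_right_zero[OF lim[folded E_def]] .
  ultimately have "((\<lambda>r. (\<Phi> r - \<Phi> s) / (r - s) - D) \<longlongrightarrow> 0) (at s within T)"
    by (rule Lim_null_comparison)
  then show ?thesis
    unfolding has_field_derivative_iff \<Phi>_def[symmetric] D_def[symmetric] by (rule LIM_zero_cancel)
qed

lemma DERIV_within_nonpos_imp_le_initial:
  fixes \<Phi> D :: "real \<Rightarrow> real"
  assumes deriv: "\<And>s. a \<le> s \<Longrightarrow> (\<Phi> has_real_derivative D s) (at s within {a..})"
    and nonpos: "\<And>s. a < s \<Longrightarrow> D s \<le> 0" and t: "a \<le> t"
  shows "\<Phi> t \<le> \<Phi> a"
proof (rule DERIV_nonpos_imp_decreasing_open[OF t])
  fix s assume "a < s" "s < t"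
  moreover have "at s within {a..} = at s"
    using \<open>a < s\<close> by (intro at_within_interior) auto
  ultimately show "\<exists>y. (\<Phi> has_real_derivative y) (at s) \<and> y \<le> 0"
    using deriv[of s] nonpos[of s] by auto
next
  show "continuous_on {a..t} \<Phi>"
    unfolding continuous_on_eq_continuous_within
  proof
    fix s assume "s \<in> {a..t}"
    then have "continuous (at s within {a..}) \<Phi>"
      using deriv[THEN DERIV_continuous] by auto
    then show "continuous (at s within {a..t}) \<Phi>"
      by (rule continuous_within_subset) auto
  qed
qed

section \<open>The truncated coagulation operator\<close>

lemma nn_integral_tensor_finite:
  fixes f :: "'a \<Rightarrow> real"
  assumes f: "integrable M f" "\<And>x. 0 \<le> f x" and c: "0 \<le> c"
  shows "(\<integral>\<^sup>+z. \<integral>\<^sup>+e. ennreal (c * f z * f e) \<partial>M \<partial>M) < \<infinity>"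
proof -
  define F where "F = (\<integral>\<^sup>+e. ennreal (f e) \<partial>M)"
  have F: "F < \<infinity>"
    unfolding F_def using f by (subst nn_integral_eq_integral) auto
  have "(\<integral>\<^sup>+z. \<integral>\<^sup>+e. ennreal (c * f z * f e) \<partial>M \<partial>M) = (\<integral>\<^sup>+z. ennreal c * ennreal (f z) * F \<partial>M)"
    unfolding F_def using f c
    by (intro nn_integral_cong) (auto simp: ennreal_mult nn_integral_cmult[symmetric])
  also have "\<dots> = ennreal c * F * F"
    unfolding F_def using f by (subst nn_integral_multc) (auto simp: nn_integral_cmult)
  finally show ?thesis
    using F by (simp add: ennreal_mult_less_top)
qed

lemma ennreal_integral_le_nn_integral:
  fixes f :: "'a \<Rightarrow> real"
  assumes "f \<in> borel_measurable M" "\<And>x. 0 \<le> f x"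
  shows "ennreal (integral\<^sup>L M f) \<le> (\<integral>\<^sup>+x. ennreal (f x) \<partial>M)"
proof (cases "integrable M f")
  case True
  then show ?thesis using assms by (subst nn_integral_eq_integral) auto
qed (simp add: not_integrable_integral_eq)

text \<open>The kernel is only assumed bounded off the lines \<open>x = 1\<close> and \<open>y = 1\<close>: the kernel
  hypotheses say nothing about \<open>\<Psi>\<close> there, but these lines are null sets.\<close>
locale truncated_coagulation =
  fixes K :: "real \<Rightarrow> real \<Rightarrow> real" and N \<theta> C :: real
  assumes K_measurable[measurable]: "case_prod K \<in> borel_measurable borel"
    and K_nonneg: "\<And>x y. 0 \<le> K x y"
    and K_sym: "\<And>x y. K x y = K y x"
    and K_support: "\<And>x y. K x y \<noteq> 0 \<Longrightarrow> x \<in> {0<..<N} \<and> y \<in> {0<..<N}"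
    and K_bounded: "\<And>x y. x \<noteq> 1 \<Longrightarrow> y \<noteq> 1 \<Longrightarrow> K x y \<le> C"
    and theta_cases: "\<theta> = 0 \<or> \<theta> = 1"
begin

lemma C_nonneg: "0 \<le> C"
  using K_bounded[of 0 0] K_nonneg[of 0 0] by simp

lemma measurable_K_comp[measurable]:
  assumes [measurable]: "a \<in> borel_measurable M" "b \<in> borel_measurable M"
  shows "(\<lambda>x. K (a x) (b x)) \<in> borel_measurable M"
proof -
  have "(\<lambda>x. (a x, b x)) \<in> measurable M borel"
    using measurable_Pair[of a M borel b borel] by (simp add: borel_prod)
  from measurable_compose[OF this K_measurable] show ?thesis by simp
qed

definition coag_gain :: "(real \<Rightarrow> real) \<Rightarrow> real \<Rightarrow> real" where
  "coag_gain f z = (LINT e:{0<..<z}|lborel. K (z - e) e * f (z - e) * f e)"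

definition coag_loss :: "(real \<Rightarrow> real) \<Rightarrow> real \<Rightarrow> real" where
  "coag_loss f z = (LINT e:{0<..<N - \<theta> * z}|lborel. K z e * f z * f e)"

lemma K_mult_restrict:
  assumes "\<And>x. x \<in> {0<..<N} \<Longrightarrow> g x = f x"
  shows "K a b * g a * g b = K a b * f a * f b"
  using K_support[of a b] assms by (cases "K a b = 0") auto

lemma coag_gain_restrict:
  assumes "\<And>x. x \<in> {0<..<N} \<Longrightarrow> g x = f x"
  shows "coag_gain g = coag_gain f"
proof
  fix z
  have "\<And>e. K (z - e) e * g (z - e) * g e = K (z - e) e * f (z - e) * f e"
    using K_mult_restrict[OF assms] .
  then show "coag_gain g z = coag_gain f z"
    by (simp only: coag_gain_def)
qed

lemma coag_loss_restrict:
  assumes "\<And>x. x \<in> {0<..<N} \<Longrightarrow> g x = f x"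
  shows "coag_loss g = coag_loss f"
proof
  fix z
  have "\<And>e. K z e * g z * g e = K z e * f z * f e"
    using K_mult_restrict[OF assms] .
  then show "coag_loss g z = coag_loss f z"
    by (simp only: coag_loss_def)
qed

definition loss_rate :: "(real \<Rightarrow> real) \<Rightarrow> real \<Rightarrow> real \<Rightarrow> real" where
  "loss_rate f z e = indicator {0<..<N} z * indicator {0<..<N - \<theta> * z} e * (K z e * f z * f e)"

definition gain_rate :: "(real \<Rightarrow> real) \<Rightarrow> real \<Rightarrow> real \<Rightarrow> real" where
  "gain_rate f z e = indicator {0<..<N} z * indicator {0<..<z} e * (K (z - e) e * f (z - e) * f e)"

text \<open>For \<open>\<theta> = 1\<close> the loss term only counts pairs with \<open>z + e < N\<close>, which is symmetric.\<close>
lemma loss_rate_swap: "loss_rate f e z = loss_rate f z e"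
proof (cases "K z e = 0")
  case True
  then show ?thesis using K_sym[of z e] by (simp add: loss_rate_def)
next
  case False
  then have "z \<in> {0<..<N}" "e \<in> {0<..<N}" using K_support by blast+
  then show ?thesis
    using theta_cases K_sym[of z e] by (auto simp: loss_rate_def indicator_def)
qed

context
  fixes f :: "real \<Rightarrow> real"
  assumes f_measurable[measurable]: "f \<in> borel_measurable borel"
    and f_nonneg: "\<And>x. 0 \<le> f x" and f_integrable: "integrable lborel f"
begin

lemma loss_rate_nonneg: "0 \<le> loss_rate f z e"
  using K_nonneg f_nonneg by (simp add: loss_rate_def)

lemma measurable_loss_rate[measurable]:
  assumes [measurable]: "a \<in> borel_measurable M" "b \<in> borel_measurable M"
  shows "(\<lambda>x. loss_rate f (a x) (b x)) \<in> borel_measurable M"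
  unfolding loss_rate_def indicator_def greaterThanLessThan_iff by measurable

lemma measurable_gain_rate[measurable]:
  assumes [measurable]: "a \<in> borel_measurable M" "b \<in> borel_measurable M"
  shows "(\<lambda>x. gain_rate f (a x) (b x)) \<in> borel_measurable M"
  unfolding gain_rate_def indicator_def greaterThanLessThan_iff by measurable

lemma measurable_coag_gain[measurable]: "coag_gain f \<in> borel_measurable borel"
proof -
  have "(\<lambda>(z, e). indicator {0<..<z} e * (K (z - e) e * f (z - e) * f e)) \<in> borel_measurable (lborel \<Otimes>\<^sub>M lborel)"
    unfolding indicator_def greaterThanLessThan_iff by measurable
  from lborel.borel_measurable_lebesgue_integral[OF this] show ?thesis
    by (simp add: coag_gain_def[abs_def] set_lebesgue_integral_def)
qed

lemma measurable_coag_loss[measurable]: "coag_loss f \<in> borel_measurable borel"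
proof -
  have "(\<lambda>(z, e). indicator {0<..<N - \<theta> * z} e * (K z e * f z * f e)) \<in> borel_measurable (lborel \<Otimes>\<^sub>M lborel)"
    unfolding indicator_def greaterThanLessThan_iff by measurable
  from lborel.borel_measurable_lebesgue_integral[OF this] show ?thesis
    by (simp add: coag_loss_def[abs_def] set_lebesgue_integral_def)
qed

lemma coag_gain_nonneg: "0 \<le> coag_gain f z"
  unfolding coag_gain_def set_lebesgue_integral_def
  by (intro Bochner_Integration.integral_nonneg) (simp add: K_nonneg f_nonneg)

lemma coag_loss_nonneg: "0 \<le> coag_loss f z"
  unfolding coag_loss_def set_lebesgue_integral_def
  by (intro Bochner_Integration.integral_nonneg) (simp add: K_nonneg f_nonneg)

lemma set_integrable_loss_slice:
  assumes z: "z \<noteq> 1" and A: "A \<in> sets borel"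
  shows "set_integrable lborel A (\<lambda>e. K z e * f z * f e)"
proof (rule set_integrable_bound)
  have "set_integrable lborel A f"
    using integrable_mult_indicator[of A lborel f] A f_integrable by (simp add: set_integrable_def)
  then show "set_integrable lborel A (\<lambda>e. C * f z * f e)"
    using set_integrable_mult_right[of "C * f z"] by blast
  show "set_borel_measurable lborel A (\<lambda>e. K z e * f z * f e)"
    using A by (simp add: set_borel_measurable_def)
  have bound: "K z e * f z * f e \<le> C * f z * f e" if "e \<noteq> 1" for e
    using K_bounded[OF z that] f_nonneg by (simp add: mult_right_mono)
  show "AE e in lborel. e \<in> A \<longrightarrow> norm (K z e * f z * f e) \<le> norm (C * f z * f e)"
    using AE_lborel_singleton[of 1]
    by (rule eventually_mono) (use bound K_nonneg f_nonneg in \<open>auto intro: order.trans[OF _ abs_ge_self]\<close>)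
qed

context
  fixes h :: "real \<Rightarrow> real" and H :: real
  assumes h_measurable[measurable]: "h \<in> borel_measurable borel"
    and h_nonneg: "\<And>x. 0 \<le> h x" and h_bounded: "\<And>x. x \<in> {0<..<N} \<Longrightarrow> h x \<le> H"
    and h_subadditive: "\<And>x y. 0 < x \<Longrightarrow> 0 < y \<Longrightarrow> h (x + y) \<le> h x + h y"
begin

lemma ennreal_weighted_coag_loss:
  assumes z: "z \<noteq> 1"
  shows "ennreal (indicator {0<..<N} z * h z * coag_loss f z) = (\<integral>\<^sup>+e. ennreal (h z * loss_rate f z e) \<partial>lborel)"
proof -
  have "ennreal (coag_loss f z) = (\<integral>\<^sup>+e. ennreal (indicator {0<..<N - \<theta> * z} e * (K z e * f z * f e)) \<partial>lborel)"
    using set_integrable_loss_slice[OF z, of "{0<..<N - \<theta> * z}"] K_nonneg f_nonneg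
    unfolding coag_loss_def set_lebesgue_integral_def set_integrable_def
    by (subst nn_integral_eq_integral) auto
  then have "ennreal (indicator {0<..<N} z * h z * coag_loss f z)
      = ennreal (indicator {0<..<N} z * h z) * (\<integral>\<^sup>+e. ennreal (indicator {0<..<N - \<theta> * z} e * (K z e * f z * f e)) \<partial>lborel)"
    using h_nonneg coag_loss_nonneg by (simp add: ennreal_mult)
  also have "\<dots> = (\<integral>\<^sup>+e. ennreal (h z * loss_rate f z e) \<partial>lborel)"
    using h_nonneg K_nonneg f_nonneg
    by (subst nn_integral_cmult[symmetric]) (auto intro!: nn_integral_cong simp: loss_rate_def ennreal_mult[symmetric] mult_ac)
  finally show ?thesis .
qed

lemma ennreal_weighted_coag_gain_le:
  "ennreal (indicator {0<..<N} z * h z * coag_gain f z) \<le> (\<integral>\<^sup>+e. ennreal (h z * gain_rate f z e) \<partial>lborel)"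
proof -
  have "ennreal (indicator {0<..<N} z * h z * coag_gain f z)
      = ennreal (indicator {0<..<N} z * h z) * ennreal (coag_gain f z)"
    using h_nonneg coag_gain_nonneg by (simp add: ennreal_mult)
  also have "\<dots> \<le> ennreal (indicator {0<..<N} z * h z) *
      (\<integral>\<^sup>+e. ennreal (indicator {0<..<z} e * (K (z - e) e * f (z - e) * f e)) \<partial>lborel)"
  proof (rule mult_left_mono)
    have "(\<lambda>e. indicator {0<..<z} e * (K (z - e) e * f (z - e) * f e)) \<in> borel_measurable lborel"
      unfolding indicator_def greaterThanLessThan_iff by measurable
    then show "ennreal (coag_gain f z)
        \<le> (\<integral>\<^sup>+e. ennreal (indicator {0<..<z} e * (K (z - e) e * f (z - e) * f e)) \<partial>lborel)"
      unfolding coag_gain_def set_lebesgue_integral_def real_scaleR_def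
      using K_nonneg f_nonneg by (intro ennreal_integral_le_nn_integral) auto
  qed simp
  also have "\<dots> = (\<integral>\<^sup>+e. ennreal (h z * gain_rate f z e) \<partial>lborel)"
    using h_nonneg K_nonneg f_nonneg
    by (subst nn_integral_cmult[symmetric]) (auto intro!: nn_integral_cong simp: gain_rate_def ennreal_mult[symmetric] mult_ac)
  finally show ?thesis .
qed

lemma weighted_loss_rate_le:
  assumes "z \<noteq> 1" "e \<noteq> 1"
  shows "h z * loss_rate f z e \<le> \<bar>H\<bar> * C * f z * f e"
proof (cases "z \<in> {0<..<N}")
  case True
  have "h z * (indicator {0<..<N - \<theta> * z} e * K z e) \<le> \<bar>H\<bar> * C"
    using h_bounded[OF True] h_nonneg[of z] K_bounded[OF assms] K_nonneg[of z e]
    by (intro mult_mono) (auto simp: indicator_def)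
  then have "h z * (indicator {0<..<N - \<theta> * z} e * K z e) * (f z * f e) \<le> \<bar>H\<bar> * C * (f z * f e)"
    using f_nonneg by (simp add: mult_right_mono)
  then show ?thesis
    using True by (simp add: loss_rate_def mult_ac)
qed (use C_nonneg f_nonneg in \<open>simp add: loss_rate_def\<close>)

lemma weighted_loss_finite:
  "(\<integral>\<^sup>+z. \<integral>\<^sup>+e. ennreal (h z * loss_rate f z e) \<partial>lborel \<partial>lborel) < \<infinity>"
proof -
  have "(\<integral>\<^sup>+z. \<integral>\<^sup>+e. ennreal (h z * loss_rate f z e) \<partial>lborel \<partial>lborel)
      \<le> (\<integral>\<^sup>+z. \<integral>\<^sup>+e. ennreal (\<bar>H\<bar> * C * f z * f e) \<partial>lborel \<partial>lborel)"
  proof (intro nn_integral_mono_AE)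
    show "AE z in lborel. (\<integral>\<^sup>+e. ennreal (h z * loss_rate f z e) \<partial>lborel)
        \<le> (\<integral>\<^sup>+e. ennreal (\<bar>H\<bar> * C * f z * f e) \<partial>lborel)"
      using AE_lborel_singleton[of 1]
    proof eventually_elim
      case (elim z)
      show ?case
        using AE_lborel_singleton[of 1]
        by (intro nn_integral_mono_AE) (auto elim!: eventually_mono intro!: ennreal_leI weighted_loss_rate_le elim)
    qed
  qed
  also have "\<dots> < \<infinity>"
    using f_integrable f_nonneg C_nonneg by (intro nn_integral_tensor_finite) auto
  finally show ?thesis .
qed

lemma weighted_loss_swap:
  "(\<integral>\<^sup>+z. \<integral>\<^sup>+e. ennreal (h e * loss_rate f z e) \<partial>lborel \<partial>lborel)
     = (\<integral>\<^sup>+z. \<integral>\<^sup>+e. ennreal (h z * loss_rate f z e) \<partial>lborel \<partial>lborel)"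
proof -
  have "(\<lambda>(z, e). ennreal (h e * loss_rate f z e)) \<in> borel_measurable (lborel \<Otimes>\<^sub>M lborel)"
    by measurable
  from lborel_pair.Fubini'[OF this] show ?thesis
    by (simp add: loss_rate_swap)
qed

text \<open>After the substitution \<open>z = x + e\<close>, subadditivity of the weight compares the gain
  with the loss.\<close>
lemma gain_rate_shift_le: "h (e + x) * gain_rate f (e + x) e \<le> (h x + h e) * loss_rate f x e"
proof (cases "K x e = 0")
  case True
  then show ?thesis by (simp add: gain_rate_def loss_rate_def)
next
  case False
  then have x: "x \<in> {0<..<N}" and e: "e \<in> {0<..<N}"
    using K_support by blast+
  have F: "0 \<le> K x e * f x * f e"
    using K_nonneg f_nonneg by simp
  show ?thesis
  proof (cases "e + x < N")
    case True
    then have "loss_rate f x e = K x e * f x * f e"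
      using x e theta_cases by (auto simp: loss_rate_def)
    moreover have "gain_rate f (e + x) e = K x e * f x * f e"
      using x e True by (simp add: gain_rate_def)
    moreover have "h (e + x) \<le> h x + h e"
      using h_subadditive[of e x] x e by (simp add: add.commute)
    ultimately show ?thesis
      using F by (simp add: mult_right_mono)
  next
    case False
    then show ?thesis
      using h_nonneg loss_rate_nonneg by (simp add: gain_rate_def)
  qed
qed

lemma weighted_gain_le_twice_loss:
  "(\<integral>\<^sup>+z. \<integral>\<^sup>+e. ennreal (h z * gain_rate f z e) \<partial>lborel \<partial>lborel)
     \<le> 2 * (\<integral>\<^sup>+z. \<integral>\<^sup>+e. ennreal (h z * loss_rate f z e) \<partial>lborel \<partial>lborel)"
proof -
  have "(\<lambda>(z, e). ennreal (h z * gain_rate f z e)) \<in> borel_measurable (lborel \<Otimes>\<^sub>M lborel)"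
    by measurable
  from lborel_pair.Fubini'[OF this]
  have "(\<integral>\<^sup>+z. \<integral>\<^sup>+e. ennreal (h z * gain_rate f z e) \<partial>lborel \<partial>lborel)
      = (\<integral>\<^sup>+e. \<integral>\<^sup>+z. ennreal (h z * gain_rate f z e) \<partial>lborel \<partial>lborel)"
    by simp
  also have "\<dots> = (\<integral>\<^sup>+e. \<integral>\<^sup>+x. ennreal (h (e + x) * gain_rate f (e + x) e) \<partial>lborel \<partial>lborel)"
  proof (rule nn_integral_cong)
    fix e
    have "(\<lambda>z. ennreal (h z * gain_rate f z e)) \<in> borel_measurable borel"
      by measurable
    from nn_integral_real_affine[OF this, of 1 e]
    show "(\<integral>\<^sup>+z. ennreal (h z * gain_rate f z e) \<partial>lborel)
        = (\<integral>\<^sup>+x. ennreal (h (e + x) * gain_rate f (e + x) e) \<partial>lborel)"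
      by simp
  qed
  also have "\<dots> \<le> (\<integral>\<^sup>+e. \<integral>\<^sup>+x. ennreal ((h x + h e) * loss_rate f x e) \<partial>lborel \<partial>lborel)"
    by (intro nn_integral_mono ennreal_leI gain_rate_shift_le)
  also have "\<dots> = (\<integral>\<^sup>+x. \<integral>\<^sup>+e. ennreal ((h x + h e) * loss_rate f x e) \<partial>lborel \<partial>lborel)"
    by (rule lborel_pair.Fubini') measurable
  also have "\<dots> = (\<integral>\<^sup>+x. (\<integral>\<^sup>+e. ennreal (h x * loss_rate f x e) \<partial>lborel)
      + (\<integral>\<^sup>+e. ennreal (h e * loss_rate f x e) \<partial>lborel) \<partial>lborel)"
    using h_nonneg loss_rate_nonneg
    by (intro nn_integral_cong) (simp add: nn_integral_add[symmetric] ennreal_plus[symmetric] distrib_right del: ennreal_plus)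
  also have "\<dots> = (\<integral>\<^sup>+z. \<integral>\<^sup>+e. ennreal (h z * loss_rate f z e) \<partial>lborel \<partial>lborel)
      + (\<integral>\<^sup>+z. \<integral>\<^sup>+e. ennreal (h e * loss_rate f z e) \<partial>lborel \<partial>lborel)"
    by (rule nn_integral_add) measurable
  finally show ?thesis
    by (simp add: weighted_loss_swap mult_2)
qed

lemma weighted_coag_nonpos:
  "(LINT z:{0<..<N}|lborel. h z * ((1/2) * coag_gain f z - coag_loss f z)) \<le> 0"
proof -
  define P where "P z = indicator {0<..<N} z * h z * coag_gain f z" for z
  define Q where "Q z = indicator {0<..<N} z * h z * coag_loss f z" for z
  have P_nonneg: "0 \<le> P z" and Q_nonneg: "0 \<le> Q z" for z
    using h_nonneg coag_gain_nonneg coag_loss_nonneg by (simp_all add: P_def Q_def)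
  have [measurable]: "P \<in> borel_measurable lborel" "Q \<in> borel_measurable lborel"
    unfolding P_def[abs_def] Q_def[abs_def] by measurable
  have "(\<integral>\<^sup>+z. Q z \<partial>lborel) = (\<integral>\<^sup>+z. \<integral>\<^sup>+e. ennreal (h z * loss_rate f z e) \<partial>lborel \<partial>lborel)"
    using AE_lborel_singleton[of 1]
    by (intro nn_integral_cong_AE) (auto elim!: eventually_mono simp: Q_def ennreal_weighted_coag_loss)
  then have Q_finite: "(\<integral>\<^sup>+z. Q z \<partial>lborel) < \<infinity>"
    and PQ: "(\<integral>\<^sup>+z. P z \<partial>lborel) \<le> 2 * (\<integral>\<^sup>+z. Q z \<partial>lborel)"
    using weighted_loss_finite
      order.trans[OF nn_integral_mono[OF ennreal_weighted_coag_gain_le] weighted_gain_le_twice_loss]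
    by (simp_all add: P_def)
  have P: "integrable lborel P" and Q: "integrable lborel Q"
    using PQ Q_finite P_nonneg Q_nonneg
    by (auto intro!: integrableI_nonneg simp: ennreal_mult_less_top order.strict_trans1)
  have "ennreal (integral\<^sup>L lborel P) \<le> ennreal (2 * integral\<^sup>L lborel Q)"
    using PQ P Q P_nonneg Q_nonneg by (simp add: nn_integral_eq_integral ennreal_mult)
  then have PQ_integral: "integral\<^sup>L lborel P \<le> 2 * integral\<^sup>L lborel Q"
    using Q_nonneg by simp
  have "(LINT z:{0<..<N}|lborel. h z * ((1/2) * coag_gain f z - coag_loss f z))
      = integral\<^sup>L lborel (\<lambda>z. (1/2) * P z - Q z)"
    unfolding set_lebesgue_integral_def
    by (intro Bochner_Integration.integral_cong) (simp_all add: P_def Q_def algebra_simps)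
  also have "\<dots> = (1/2) * integral\<^sup>L lborel P - integral\<^sup>L lborel Q"
    using P Q by simp
  also have "\<dots> \<le> 0"
    using PQ_integral by simp
  finally show ?thesis .
qed

end

end

lemma weighted_coag_rate_nonpos:
  fixes u u' h :: "real \<Rightarrow> real"
  assumes u_nonneg: "\<And>z. z \<in> {0<..<N} \<Longrightarrow> 0 \<le> u z" and u: "set_integrable lborel {0<..<N} u"
    and u': "set_integrable lborel {0<..<N} u'"
    and rate: "AE z in lborel. z \<in> {0<..<N} \<longrightarrow> u' z = (1/2) * coag_gain u z - coag_loss u z"
    and h[measurable]: "h \<in> borel_measurable borel" and h_nonneg: "\<And>x. 0 \<le> h x"
    and h_bounded: "\<And>x. x \<in> {0<..<N} \<Longrightarrow> h x \<le> H"
    and h_subadditive: "\<And>x y. 0 < x \<Longrightarrow> 0 < y \<Longrightarrow> h (x + y) \<le> h x + h y"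
  shows "(LINT z:{0<..<N}|lborel. h z * u' z) \<le> 0"
proof -
  define f where "f z = indicator {0<..<N} z * u z" for z
  have f_nonneg: "0 \<le> f z" for z
    using u_nonneg by (simp add: f_def indicator_def)
  have f_integrable: "integrable lborel f"
    using u by (simp add: f_def[abs_def] set_integrable_def)
  have f_measurable[measurable]: "f \<in> borel_measurable borel"
    using borel_measurable_integrable[OF f_integrable] by simp
  note measurable_coag_gain[OF f_measurable f_nonneg f_integrable, measurable]
    measurable_coag_loss[OF f_measurable f_nonneg f_integrable, measurable]
  have "coag_gain u = coag_gain f" and "coag_loss u = coag_loss f"
    by (auto intro!: coag_gain_restrict coag_loss_restrict simp: f_def)
  with rate have "AE z in lborel. z \<in> {0<..<N} \<longrightarrow> u' z = (1/2) * coag_gain f z - coag_loss f z"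
    by simp
  moreover have "(\<lambda>z. indicator {0<..<N} z * (h z * u' z)) \<in> borel_measurable lborel"
    using set_integrable_bounded_mult[OF u' _ _, of h H] h_nonneg h_bounded
    by (auto simp: set_integrable_def)
  ultimately have "(LINT z:{0<..<N}|lborel. h z * u' z)
      = (LINT z:{0<..<N}|lborel. h z * ((1/2) * coag_gain f z - coag_loss f z))"
    unfolding set_lebesgue_integral_def real_scaleR_def
    by (intro integral_cong_AE) (auto elim!: eventually_mono split: split_indicator)
  also have "\<dots> \<le> 0"
    by (rule weighted_coag_nonpos[OF f_measurable f_nonneg f_integrable h h_nonneg h_bounded h_subadditive])
  finally show ?thesis .
qed

end

section \<open>The truncated kernel\<close>

lemma mult_powr_neg_le_interval_bound:
  fixes k \<beta> N x y :: real
  assumes k: "0 \<le> k" and \<beta>: "0 \<le> \<beta>" and N: "1 \<le> N"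
    and x: "x \<in> {1/N<..<N}" and y: "y \<in> {1/N<..<N}"
  shows "k * x * y powr (-\<beta>) \<le> k * N * (1/N) powr (-\<beta>)"
proof (rule mult_mono)
  show "y powr (-\<beta>) \<le> (1/N) powr (-\<beta>)"
    using y \<beta> N by (intro powr_mono2') auto
  show "k * x \<le> k * N"
    using x k by (simp add: mult_left_mono)
qed (use k N in auto)

lemma kernel_hyp_bounded:
  assumes hyp: "kernel_hyp Psi \<beta> k" and N: "1 \<le> N"
    and z: "z \<in> {1/N<..<N}" "z \<noteq> 1" and e: "e \<in> {1/N<..<N}" "e \<noteq> 1"
  shows "Psi z e \<le> k * ((1/N) * (1/N)) powr (-\<beta>) + k * N * (1/N) powr (-\<beta>) + 2 * k * N"
proof -
  have \<beta>: "0 < \<beta>" and k: "0 < k"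
    and sym: "\<And>z e. 0 < z \<Longrightarrow> 0 < e \<Longrightarrow> Psi z e = Psi e z"
    and small_small: "\<And>z e. z \<in> {0<..<1} \<Longrightarrow> e \<in> {0<..<1} \<Longrightarrow> Psi z e \<le> k * (z * e) powr (-\<beta>)"
    and small_large: "\<And>z e. z \<in> {0<..<1} \<Longrightarrow> e \<in> {1<..} \<Longrightarrow> Psi z e \<le> k * e * z powr (-\<beta>)"
    and large_large: "\<And>z e. z \<in> {1<..} \<Longrightarrow> e \<in> {1<..} \<Longrightarrow> Psi z e \<le> k * (z + e)"
    using hyp unfolding kernel_hyp_def by blast+
  have N': "0 < 1/N"
    using N by simp
  have pos: "0 < x" if "x \<in> {1/N<..<N}" for x
    using that N' by (meson greaterThanLessThan_iff less_trans)
  have zpos: "0 < z" and epos: "0 < e"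
    using pos z(1) e(1) by auto
  have terms_nonneg: "0 \<le> k * ((1/N) * (1/N)) powr (-\<beta>)" "0 \<le> k * N * (1/N) powr (-\<beta>)" "0 \<le> 2 * k * N"
    using k N by auto
  note small_le = mult_powr_neg_le_interval_bound[OF less_imp_le[OF k] less_imp_le[OF \<beta>] N]
  consider "z < 1" "e < 1" | "z < 1" "1 < e" | "1 < z" "e < 1" | "1 < z" "1 < e"
    using z(2) e(2) by (meson linorder_neqE_linordered_idom)
  then show ?thesis
  proof cases
    case 1
    have "(1/N) * (1/N) \<le> z * e"
      using mult_mono[of "1/N" z "1/N" e] z e zpos N' by simp
    then have "(z * e) powr (-\<beta>) \<le> ((1/N) * (1/N)) powr (-\<beta>)"
      using \<beta> N' by (intro powr_mono2') auto
    then have "Psi z e \<le> k * ((1/N) * (1/N)) powr (-\<beta>)"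
      using small_small[of z e] 1 zpos epos k by (simp add: order_trans)
    then show ?thesis
      using terms_nonneg by linarith
  next
    case 2
    then have "Psi z e \<le> k * e * z powr (-\<beta>)"
      using small_large zpos by simp
    then show ?thesis
      using small_le[OF e(1) z(1)] terms_nonneg by linarith
  next
    case 3
    then have "Psi z e \<le> k * z * e powr (-\<beta>)"
      using small_large[of e z] sym[OF zpos epos] epos by simp
    then show ?thesis
      using small_le[OF z(1) e(1)] terms_nonneg by linarith
  next
    case 4
    then have "Psi z e \<le> k * (z + e)"
      using large_large by simp
    also have "\<dots> \<le> 2 * k * N"
      using z e k by simp
    finally show ?thesis
      using terms_nonneg by linarith
  qed
qed

lemma trunc_kernel_cases:
  assumes "\<theta> \<in> {0, 1}"
  obtains "trunc_kernel Psi n \<theta> z e = 0"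
  | "z \<in> {1 / real n<..<real n}" "e \<in> {1 / real n<..<real n}"
      "trunc_kernel Psi n \<theta> z e = Psi z e"
proof (cases "z \<in> {1 / real n<..<real n} \<and> e \<in> {1 / real n<..<real n} \<and> (\<theta> = 0 \<or> z + e < real n)")
  case True
  have "0 \<le> 1 / real n" "1 / real n < z" "1 / real n < e"
    using True by auto
  then have "0 < z + e"
    by linarith
  then show ?thesis
    using True that(2) by (auto simp: trunc_kernel_def)
next
  case False
  then show ?thesis
    using assms that(1) by (auto simp: trunc_kernel_def)
qed

lemma measurable_trunc_kernel:
  assumes hyp: "kernel_hyp Psi \<beta> k" and n: "n \<ge> 1"
  shows "case_prod (trunc_kernel Psi n \<theta>) \<in> borel_measurable borel"
proof -
  define S where "S = ({0<..} \<times> {0<..} :: (real \<times> real) set)"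
  define A where "A = {1 / real n<..<real n}"
  have [measurable]: "(\<lambda>p. indicator S p * case_prod Psi p) \<in> borel_measurable (borel \<Otimes>\<^sub>M borel)"
    using hyp unfolding kernel_hyp_def set_borel_measurable_def borel_prod S_def by simp
  have A_pos: "z \<in> A \<Longrightarrow> 0 < z" for z
    using n unfolding A_def by (auto intro: less_trans[of 0 "1 / real n"])
  have "case_prod (trunc_kernel Psi n \<theta>) = (\<lambda>p. indicator S p * case_prod Psi p
      * indicator A (fst p) * indicator A (snd p) * (1 - real \<theta> + real \<theta> * indicator {0<..<real n} (fst p + snd p)))"
    using A_pos by (auto simp: fun_eq_iff trunc_kernel_def A_def S_def indicator_def)
  also have "\<dots> \<in> borel_measurable (borel \<Otimes>\<^sub>M borel)"
    unfolding A_def by measurable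
  finally show ?thesis
    by (simp add: borel_prod)
qed

lemma truncated_coagulation_trunc_kernel:
  assumes hyp: "kernel_hyp Psi \<beta> k" and n: "n \<ge> 1" and \<theta>: "\<theta> \<in> {0, 1}"
  shows "truncated_coagulation (trunc_kernel Psi n \<theta>) (real n) (real \<theta>)
    (k * ((1 / real n) * (1 / real n)) powr (-\<beta>) + k * real n * (1 / real n) powr (-\<beta>) + 2 * k * real n)"
proof
  have pos: "0 < x" if "1 / real n < x" for x
  proof -
    have "0 \<le> 1 / real n"
      by simp
    then show ?thesis
      using that by linarith
  qed
  have Psi_nonneg: "\<And>z e. 0 < z \<Longrightarrow> 0 < e \<Longrightarrow> 0 \<le> Psi z e"
    and Psi_sym: "\<And>z e. 0 < z \<Longrightarrow> 0 < e \<Longrightarrow> Psi z e = Psi e z"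
    using hyp unfolding kernel_hyp_def by blast+
  show "case_prod (trunc_kernel Psi n \<theta>) \<in> borel_measurable borel"
    using measurable_trunc_kernel[OF hyp n] .
  fix x y :: real
  show "0 \<le> trunc_kernel Psi n \<theta> x y"
    by (cases rule: trunc_kernel_cases[OF \<theta>, of Psi n x y]) (auto intro: Psi_nonneg pos)
  show "trunc_kernel Psi n \<theta> x y = trunc_kernel Psi n \<theta> y x"
    using Psi_sym[OF pos pos] by (auto simp: trunc_kernel_def indicator_def add.commute)
  show "x \<in> {0<..<real n} \<and> y \<in> {0<..<real n}" if "trunc_kernel Psi n \<theta> x y \<noteq> 0"
    using that pos by (cases rule: trunc_kernel_cases[OF \<theta>, of Psi n x y]) auto
  show "trunc_kernel Psi n \<theta> x y
      \<le> k * ((1 / real n) * (1 / real n)) powr (-\<beta>) + k * real n * (1 / real n) powr (-\<beta>) + 2 * k * real n"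
    if "x \<noteq> 1" "y \<noteq> 1"
    using hyp n that kernel_hyp_bounded[OF hyp, of "real n" x y] \<theta>
    by (cases rule: trunc_kernel_cases[OF \<theta>, of Psi n x y]) (auto simp: kernel_hyp_def)
  show "real \<theta> = 0 \<or> real \<theta> = 1"
    using \<theta> by auto
qed

section \<open>Cut-off moment weights\<close>

text \<open>The absolute values only make the weight nonnegative everywhere; it is used on
  positive sizes only.\<close>
definition cut_moment_weight :: "real \<Rightarrow> nat \<Rightarrow> real \<Rightarrow> real" where
  "cut_moment_weight \<beta> M z = min (\<bar>z\<bar> powr (-2 * \<beta>)) (real M) + \<bar>z\<bar>"

lemma measurable_cut_moment_weight[measurable]: "cut_moment_weight \<beta> M \<in> borel_measurable borel"
  unfolding cut_moment_weight_def[abs_def] by measurable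

lemma cut_moment_weight_nonneg: "0 \<le> cut_moment_weight \<beta> M z"
  by (simp add: cut_moment_weight_def)

lemma cut_moment_weight_le_bound: "z \<in> {0<..<N} \<Longrightarrow> cut_moment_weight \<beta> M z \<le> real M + N"
  by (auto simp: cut_moment_weight_def)

lemma cut_moment_weight_le: "0 < z \<Longrightarrow> cut_moment_weight \<beta> M z \<le> z powr (-2 * \<beta>) + z"
  by (simp add: cut_moment_weight_def)

lemma cut_moment_weight_mono: "M \<le> M' \<Longrightarrow> cut_moment_weight \<beta> M z \<le> cut_moment_weight \<beta> M' z"
  by (auto simp: cut_moment_weight_def intro: min.mono)

lemma cut_moment_weight_eventually_eq:
  "z powr (-2 * \<beta>) \<le> real M \<Longrightarrow> 0 < z \<Longrightarrow> cut_moment_weight \<beta> M z = z powr (-2 * \<beta>) + z"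
  by (simp add: cut_moment_weight_def)

lemma cut_moment_weight_subadditive:
  assumes "0 \<le> \<beta>" "0 < x" "0 < y"
  shows "cut_moment_weight \<beta> M (x + y) \<le> cut_moment_weight \<beta> M x + cut_moment_weight \<beta> M y"
proof -
  have "(x + y) powr (-2 * \<beta>) \<le> x powr (-2 * \<beta>)"
    using assms by (intro powr_mono2') auto
  then have "min ((x + y) powr (-2 * \<beta>)) (real M) \<le> min (x powr (-2 * \<beta>)) (real M)"
    by (rule min.mono) simp
  moreover have "0 \<le> min (y powr (-2 * \<beta>)) (real M)"
    by simp
  moreover have "\<bar>x + y\<bar> = \<bar>x\<bar> + \<bar>y\<bar>"
    using assms by simp
  ultimately show ?thesis
    using assms unfolding cut_moment_weight_def by linarith
qed

lemma set_integral_cut_moment_weight_le: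
  fixes u :: "real \<Rightarrow> real"
  assumes u[measurable]: "u \<in> borel_measurable lborel" and u_nonneg: "\<And>z. 0 < z \<Longrightarrow> 0 \<le> u z"
    and int: "set_integrable lborel {0<..} (\<lambda>z. (z powr (-2 * \<beta>) + z) * u z)"
  shows "(LINT z:{0<..<N}|lborel. cut_moment_weight \<beta> M z * u z)
    \<le> (LINT z:{0<..}|lborel. (z powr (-2 * \<beta>) + z) * u z)"
proof -
  have pointwise: "0 \<le> indicator {0<..<N} z * (cut_moment_weight \<beta> M z * u z)
      \<and> indicator {0<..<N} z * (cut_moment_weight \<beta> M z * u z) \<le> indicator {0<..} z * ((z powr (-2 * \<beta>) + z) * u z)"
    for z
  proof (cases "0 < z")
    case True
    then have "cut_moment_weight \<beta> M z * u z \<le> (z powr (-2 * \<beta>) + z) * u z"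
      using u_nonneg cut_moment_weight_le by (simp add: mult_right_mono)
    then show ?thesis
      using True u_nonneg[OF True] cut_moment_weight_nonneg[of \<beta> M z] by (simp add: indicator_def)
  qed (simp add: indicator_def)
  have R: "integrable lborel (\<lambda>z. indicator {0<..} z * ((z powr (-2 * \<beta>) + z) * u z))"
    using int by (simp add: set_integrable_def)
  have "integrable lborel (\<lambda>z. indicator {0<..<N} z * (cut_moment_weight \<beta> M z * u z))"
  proof (rule Bochner_Integration.integrable_bound[OF R])
    show "AE z in lborel. norm (indicator {0<..<N} z * (cut_moment_weight \<beta> M z * u z))
        \<le> norm (indicator {0<..} z * ((z powr (-2 * \<beta>) + z) * u z))"
      using pointwise by (intro AE_I2) (metis abs_of_nonneg order_trans real_norm_def)
  qed simp
  with R pointwise show ?thesis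
    unfolding set_lebesgue_integral_def real_scaleR_def by (intro integral_mono) auto
qed

lemma nn_set_integral_moment_le:
  fixes u :: "real \<Rightarrow> real"
  assumes u: "set_integrable lborel {0<..<N} u" and u_nonneg: "\<And>z. z \<in> {0<..<N} \<Longrightarrow> 0 \<le> u z"
    and bound: "\<And>M. (LINT z:{0<..<N}|lborel. cut_moment_weight \<beta> M z * u z) \<le> R"
  shows "(\<integral>\<^sup>+z\<in>{0<..<N}. ennreal ((z + z powr (-2 * \<beta>)) * u z) \<partial>lborel) \<le> ennreal R"
proof -
  define v where "v z = indicator {0<..<N} z * u z" for z
  have v: "integrable lborel v" and [measurable]: "v \<in> borel_measurable borel"
    using u borel_measurable_integrable[of lborel v] by (auto simp: v_def[abs_def] set_integrable_def)
  have v_nonneg: "0 \<le> v z" for z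
    using u_nonneg by (simp add: v_def indicator_def)
  define F where "F M z = ennreal (cut_moment_weight \<beta> M z * v z)" for M z
  have [measurable]: "F M \<in> borel_measurable lborel" for M
    unfolding F_def[abs_def] by measurable
  have "incseq F"
    using cut_moment_weight_mono v_nonneg
    by (auto simp: incseq_def le_fun_def F_def intro!: ennreal_leI mult_right_mono)
  have F_integral: "(\<integral>\<^sup>+z. F M z \<partial>lborel) = ennreal (LINT z:{0<..<N}|lborel. cut_moment_weight \<beta> M z * u z)" for M
  proof -
    have "integrable lborel (\<lambda>z. cut_moment_weight \<beta> M z * v z)"
    proof (rule Bochner_Integration.integrable_bound[where f="\<lambda>z. (real M + N) * v z"])
      show "AE z in lborel. norm (cut_moment_weight \<beta> M z * v z) \<le> norm ((real M + N) * v z)"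
        using cut_moment_weight_le_bound[of _ N \<beta> M] cut_moment_weight_nonneg v_nonneg
        by (intro AE_I2) (auto simp: v_def indicator_def abs_mult intro: mult_right_mono order.trans[OF _ abs_ge_self])
    qed (use v in auto)
    then have "(\<integral>\<^sup>+z. F M z \<partial>lborel) = ennreal (integral\<^sup>L lborel (\<lambda>z. cut_moment_weight \<beta> M z * v z))"
      unfolding F_def by (rule nn_integral_eq_integral) (simp add: cut_moment_weight_nonneg v_nonneg)
    then show ?thesis
      by (simp add: set_lebesgue_integral_def v_def mult_ac)
  qed
  have SUP_F: "ennreal ((z + z powr (-2 * \<beta>)) * u z) * indicator {0<..<N} z = (SUP M. F M z)" for z
  proof (cases "z \<in> {0<..<N}")
    case True
    then have F: "F M z = ennreal (cut_moment_weight \<beta> M z * u z)" for M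
      by (simp add: F_def v_def)
    obtain M0 :: nat where M0: "z powr (-2 * \<beta>) \<le> real M0"
      using real_arch_simple by blast
    have "(SUP M. F M z) \<le> ennreal ((z + z powr (-2 * \<beta>)) * u z)"
      using True u_nonneg cut_moment_weight_le[of z \<beta>]
      by (auto simp: F add.commute intro!: SUP_least ennreal_leI mult_right_mono)
    moreover have "ennreal ((z + z powr (-2 * \<beta>)) * u z) \<le> (SUP M. F M z)"
      using cut_moment_weight_eventually_eq[OF M0] True
      by (intro SUP_upper2[of M0]) (auto simp: F add.commute)
    ultimately show ?thesis
      using True by simp
  qed (simp add: F_def v_def)
  have "(\<integral>\<^sup>+z\<in>{0<..<N}. ennreal ((z + z powr (-2 * \<beta>)) * u z) \<partial>lborel) = (\<integral>\<^sup>+z. (SUP M. F M z) \<partial>lborel)"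
    by (intro nn_integral_cong) (rule SUP_F)
  also have "\<dots> = (SUP M. \<integral>\<^sup>+z. F M z \<partial>lborel)"
    by (rule nn_integral_monotone_convergence_SUP[OF \<open>incseq F\<close>]) simp
  also have "\<dots> \<le> ennreal R"
    using bound by (auto simp: F_integral intro!: SUP_least ennreal_leI)
  finally show ?thesis .
qed

section \<open>Decay of the weighted moments\<close>

lemma trunc_solution_weighted_moment_le_initial:
  fixes h :: "real \<Rightarrow> real"
  assumes coag: "truncated_coagulation (trunc_kernel Psi n \<theta>) (real n) (real \<theta>) C"
    and sol: "trunc_solution Psi gin n \<theta> g" and gin[measurable]: "gin \<in> borel_measurable lborel"
    and h[measurable]: "h \<in> borel_measurable borel" and h_nonneg: "\<And>x. 0 \<le> h x"
    and h_bounded: "\<And>x. x \<in> {0<..<real n} \<Longrightarrow> h x \<le> H"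
    and h_subadditive: "\<And>x y. 0 < x \<Longrightarrow> 0 < y \<Longrightarrow> h (x + y) \<le> h x + h y"
    and t: "0 \<le> t"
  shows "(LINT z:{0<..<real n}|lborel. h z * g z t) \<le> (LINT z:{0<..<real n}|lborel. h z * gin z)"
proof -
  interpret coag: truncated_coagulation "trunc_kernel Psi n \<theta>" "real n" "real \<theta>" C
    by (rule coag)
  have I[measurable]: "{0<..<real n} \<in> sets lborel"
    by simp
  obtain g' where g_nonneg: "\<forall>s\<ge>0. \<forall>z\<in>{0<..<real n}. 0 \<le> g z s"
    and g: "\<forall>s\<ge>0. set_integrable lborel {0<..<real n} (\<lambda>z. g z s)"
    and g': "\<forall>s\<ge>0. set_integrable lborel {0<..<real n} (\<lambda>z. g' z s)"
    and lim: "\<forall>s\<ge>0. ((\<lambda>r. (LINT z:{0<..<real n}|lborel. \<bar>g z r - g z s - (r - s) * g' z s\<bar>) / \<bar>r - s\<bar>)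
                    \<longlongrightarrow> 0) (at s within {0..})"
    and eq: "\<forall>s>0. AE z in lborel. z \<in> {0<..<real n} \<longrightarrow>
      g' z s = (1/2) * (LINT e:{0<..<z}|lborel. trunc_kernel Psi n \<theta> (z - e) e * g (z - e) s * g e s)
               - (LINT e:{0<..<real n - real \<theta> * z}|lborel. trunc_kernel Psi n \<theta> z e * g z s * g e s)"
    and init: "AE z in lborel. z \<in> {0<..<real n} \<longrightarrow> g z 0 = gin z"
    using sol unfolding trunc_solution_def by blast
  have h_abs: "\<And>z. z \<in> {0<..<real n} \<Longrightarrow> \<bar>h z\<bar> \<le> H"
    using h_nonneg h_bounded by simp
  define \<Phi> where "\<Phi> s = (LINT z:{0<..<real n}|lborel. h z * g z s)" for s
  have "\<Phi> t \<le> \<Phi> 0"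
  proof (rule DERIV_within_nonpos_imp_le_initial[OF _ _ t])
    fix s :: real assume "0 \<le> s"
    then show "(\<Phi> has_real_derivative (LINT z:{0<..<real n}|lborel. h z * g' z s)) (at s within {0..})"
      unfolding \<Phi>_def using g g' lim
      by (intro weighted_set_integral_has_real_derivative[OF I _ h_abs]) auto
  next
    fix s :: real assume s: "0 < s"
    have "AE z in lborel. z \<in> {0<..<real n} \<longrightarrow>
        g' z s = (1/2) * coag.coag_gain (\<lambda>z. g z s) z - coag.coag_loss (\<lambda>z. g z s) z"
      using eq s unfolding coag.coag_gain_def coag.coag_loss_def by simp
    with g_nonneg g g' s show "(LINT z:{0<..<real n}|lborel. h z * g' z s) \<le> 0"
      by (intro coag.weighted_coag_rate_nonpos[OF _ _ _ _ h h_nonneg h_bounded h_subadditive]) auto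
  qed
  also have "\<Phi> 0 = (LINT z:{0<..<real n}|lborel. h z * gin z)"
  proof -
    have "(\<lambda>z. indicator {0<..<real n} z * (h z * g z 0)) \<in> borel_measurable lborel"
      using set_integrable_bounded_mult[OF _ I _ h_abs] g
      by (auto simp: set_integrable_def)
    with init show ?thesis
      unfolding \<Phi>_def set_lebesgue_integral_def real_scaleR_def
      by (intro integral_cong_AE) (auto elim!: eventually_mono split: split_indicator)
  qed
  finally show ?thesis
    unfolding \<Phi>_def .
qed

theorem lemma4p2:
  fixes Psi :: "real \<Rightarrow> real \<Rightarrow> real" and \<beta> k :: real and gin :: "real \<Rightarrow> real"
    and n \<theta> :: nat and g :: "real \<Rightarrow> real \<Rightarrow> real" and t :: real
  assumes "kernel_hyp Psi \<beta> k"
    and "gin \<in> borel_measurable lborel"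
    and "\<forall>z>0. gin z \<ge> 0"
    and "set_integrable lborel {0<..} (\<lambda>z. (z powr (-2 * \<beta>) + z) * gin z)"
    and "n \<ge> 1" and "\<theta> \<in> {0, 1}"
    and "trunc_solution Psi gin n \<theta> g"
    and "t \<ge> 0"
  shows "(\<integral>\<^sup>+ z\<in>{0<..<real n}. ennreal ((z + z powr (-2 * \<beta>)) * g z t) \<partial>lborel)
           \<le> ennreal (LINT z:{0<..}|lborel. (z powr (-2 * \<beta>) + z) * gin z)"
proof (rule nn_set_integral_moment_le)
  have \<beta>: "0 \<le> \<beta>"
    using assms(1) by (simp add: kernel_hyp_def)
  show "set_integrable lborel {0<..<real n} (\<lambda>z. g z t)"
    and "\<And>z. z \<in> {0<..<real n} \<Longrightarrow> 0 \<le> g z t"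
    using assms(7,8) unfolding trunc_solution_def by blast+
  fix M
  have "(LINT z:{0<..<real n}|lborel. cut_moment_weight \<beta> M z * g z t)
      \<le> (LINT z:{0<..<real n}|lborel. cut_moment_weight \<beta> M z * gin z)"
    by (rule trunc_solution_weighted_moment_le_initial[OF truncated_coagulation_trunc_kernel[OF assms(1,5,6)]
          assms(7,2) measurable_cut_moment_weight cut_moment_weight_nonneg cut_moment_weight_le_bound
          cut_moment_weight_subadditive[OF \<beta>] assms(8)])
  also have "\<dots> \<le> (LINT z:{0<..}|lborel. (z powr (-2 * \<beta>) + z) * gin z)"
    using assms(2-4) by (intro set_integral_cut_moment_weight_le) auto
  finally show "(LINT z:{0<..<real n}|lborel. cut_moment_weight \<beta> M z * g z t)
      \<le> (LINT z:{0<..}|lborel. (z powr (-2 * \<beta>) + z) * gin z)" .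
qed

end
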